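(* Let $G$ be a connected undirected graph on $N\ge2$ nodes with adjacency matrix $A=(a_{ij})$, neighborhoods $\mathcal N_i=\{j:a_{ij}=1\}$, degrees $d_i=\sum_j a_{ij}$ and Laplacian $L=D-A$, $D=\mathrm{diag}(d_1,\dots,d_N)$. Let $w=(w_1,\dots,w_N)^T$ with $w_i>0$ for all $i$. Define the matrix $T$ by $T_{ii}=\big(\sum_{j\in\mathcal N_i}w_j\big)/l_{ii}$ and $T_{ij}=w_j$ for $i\ne j$, and let $\hat W=I-\epsilon\,(T\otimes L)$, where $\otimes$ is entrywise (Hadamard) multiplication. If $0<\epsilon<1/\max_i\big(\sum_{j\in\mathcal N_i}w_j\big)$, then: (1) $\hat W$ is a nonnegative matrix having $w$ as a left eigenvector and $\vec 1=(1,\dots,1)^T$ as a right eigenvector, both for eigenvalue $1$; (2) all eigenvalues of $\hat W$ lie in the closed unit disk; (3) $\hat W$ is primitive.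
   Context: $l_{ii}=d_i$ is the $i$-th diagonal entry of $L$. A matrix is primitive if it is nonnegative and some positive integer power of it has all entries positive. *)

theory Defs
  imports "HOL-Analysis.Analysis"
begin

text \<open>Matrices are square, indexed by a finite type 'n with N = CARD('n) nodes.\<close>

primrec matpow :: "'a::comm_ring_1^'n^'n \<Rightarrow> nat \<Rightarrow> 'a^'n^'n" where
  "matpow M 0 = mat 1"
| "matpow M (Suc k) = M ** matpow M k"

definition nonneg_matrix :: "real^'n^'n \<Rightarrow> bool" where
  "nonneg_matrix M \<longleftrightarrow> (\<forall>i j. M $ i $ j \<ge> 0)"

definition primitive_matrix :: "real^'n^'n \<Rightarrow> bool" where
  "primitive_matrix M \<longleftrightarrow> nonneg_matrix M \<and>
     (\<exists>k::nat. k > 0 \<and> (\<forall>i j. matpow M k $ i $ j > 0))"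

definition complex_matrix :: "real^'n^'n \<Rightarrow> complex^'n^'n" where
  "complex_matrix M = (\<chi> i j. complex_of_real (M $ i $ j))"

definition is_eigenvalue :: "real^'n^'n \<Rightarrow> complex \<Rightarrow> bool" where
  "is_eigenvalue M \<mu> \<longleftrightarrow> (\<exists>v::complex^'n. v \<noteq> 0 \<and> complex_matrix M *v v = \<mu> *s v)"

definition adjacency_matrix :: "real^'n^'n \<Rightarrow> bool" where
  "adjacency_matrix A \<longleftrightarrow> (\<forall>i j. A $ i $ j = 0 \<or> A $ i $ j = 1) \<and>
     (\<forall>i j. A $ i $ j = A $ j $ i) \<and> (\<forall>i. A $ i $ i = 0)"

definition connected_graph :: "real^'n^'n \<Rightarrow> bool" where
  "connected_graph A \<longleftrightarrow> (\<forall>i j. (i, j) \<in> {(k, l). A $ k $ l = 1}\<^sup>*)"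

definition neighbors :: "real^'n^'n \<Rightarrow> 'n \<Rightarrow> 'n set" where
  "neighbors A i = {j. A $ i $ j = 1}"

definition degree :: "real^'n^'n \<Rightarrow> 'n \<Rightarrow> real" where
  "degree A i = (\<Sum>j\<in>UNIV. A $ i $ j)"

definition laplacian :: "real^'n^'n \<Rightarrow> real^'n^'n" where
  "laplacian A = (\<chi> i j. (if i = j then degree A i else 0) - A $ i $ j)"

definition Tmat :: "real^'n^'n \<Rightarrow> real^'n \<Rightarrow> real^'n^'n" where
  "Tmat A w = (\<chi> i j. if i = j then (\<Sum>k\<in>neighbors A i. w $ k) / laplacian A $ i $ i
                       else w $ j)"

definition hadamard :: "real^'n^'n \<Rightarrow> real^'n^'n \<Rightarrow> real^'n^'n" where
  "hadamard M P = (\<chi> i j. M $ i $ j * P $ i $ j)"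

definition What :: "real \<Rightarrow> real^'n^'n \<Rightarrow> real^'n \<Rightarrow> real^'n^'n" where
  "What \<epsilon> A w = mat 1 - \<epsilon> *\<^sub>R hadamard (Tmat A w) (laplacian A)"

end

theory Submission
  imports Defs
begin

text \<open>Off the diagonal, \<open>\<hat>W\<close> is \<open>\<epsilon> a\<^sub>i\<^sub>j w\<^sub>j\<close>, and its diagonal entry is
  \<open>1 - \<epsilon> s\<^sub>i\<close> with \<open>s\<^sub>i = \<Sum>\<^sub>j a\<^sub>i\<^sub>j w\<^sub>j\<close>. Hence the rows of \<open>\<hat>W\<close> sum to 1, and by symmetry of
  \<open>A\<close> the \<open>w\<close>-weighted columns sum to \<open>w\<^sub>j\<close>. The bound on \<open>\<epsilon>\<close> makes \<open>\<hat>W\<close> nonnegative with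
  positive diagonal, so it is row-stochastic (which confines the spectrum to the unit disk), and
  positive diagonal plus positive entries along the edges of a connected graph make every
  sufficiently high power positive.\<close>

lemma matpow_nonneg:
  assumes "nonneg_matrix W"
  shows "matpow W m $ i $ j \<ge> 0"
proof (induction m arbitrary: i j)
  case 0
  then show ?case by (simp add: mat_def)
next
  case (Suc m)
  have "\<And>k. W $ i $ k * matpow W m $ k $ j \<ge> 0"
    using assms Suc.IH unfolding nonneg_matrix_def by simp
  then show ?case by (simp add: matrix_matrix_mult_def sum_nonneg)
qed

text \<open>The positive diagonal lets a path of length \<open>n\<close> be padded to any length \<open>m \<ge> n\<close>.\<close>

lemma matpow_pos_if_relpow:
  assumes nonneg: "nonneg_matrix W" and diag: "\<And>i. W $ i $ i > 0"
    and edge: "\<And>i j. (i, j) \<in> R \<Longrightarrow> W $ i $ j > 0"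
  shows "(i, j) \<in> R ^^ n \<Longrightarrow> n \<le> m \<Longrightarrow> matpow W m $ i $ j > 0"
proof (induction m arbitrary: i n)
  case 0
  then show ?case by (simp add: mat_def)
next
  case (Suc m)
  obtain l where il: "W $ i $ l > 0" and lj: "matpow W m $ l $ j > 0"
  proof (cases n)
    case 0
    then have "i = j" using Suc.prems by simp
    then show ?thesis using that[of j] diag Suc.IH[of j 0] 0 by simp
  next
    case (Suc n')
    then obtain l where "(i, l) \<in> R" and "(l, j) \<in> R ^^ n'"
      using Suc.prems relpow_Suc_D2 by metis
    moreover have "n' \<le> m" using Suc.prems(2) Suc by simp
    ultimately show ?thesis using that[of l] edge Suc.IH by blast
  qed
  have "\<And>k. W $ i $ k * matpow W m $ k $ j \<ge> 0"
    using nonneg matpow_nonneg[OF nonneg] unfolding nonneg_matrix_def by simp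
  then have "W $ i $ l * matpow W m $ l $ j \<le> (\<Sum>k\<in>UNIV. W $ i $ k * matpow W m $ k $ j)"
    by (intro member_le_sum) auto
  moreover have "0 < W $ i $ l * matpow W m $ l $ j" using il lj by simp
  ultimately show ?case by (simp add: matrix_matrix_mult_def)
qed

lemma primitive_matrix_if_connected:
  assumes nonneg: "nonneg_matrix W" and diag: "\<And>i. W $ i $ i > 0"
    and edge: "\<And>i j. (i, j) \<in> R \<Longrightarrow> W $ i $ j > 0"
    and connected: "\<And>i j. (i, j) \<in> R\<^sup>*"
  shows "primitive_matrix W"
proof -
  obtain len where len: "\<And>p. p \<in> R ^^ len p"
    using connected rtrancl_imp_relpow by (metis prod.exhaust)
  define k where "k = Suc (Max (range len))"
  have "len (i, j) \<le> k" for i j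
    unfolding k_def by (simp add: le_SucI)
  then have "\<forall>i j. matpow W k $ i $ j > 0"
    using matpow_pos_if_relpow[OF nonneg diag edge len] by blast
  then show ?thesis
    unfolding primitive_matrix_def k_def using nonneg by blast
qed

lemma eigenvalue_norm_le_1_if_stochastic:
  fixes W :: "real^'n^'n"
  assumes nonneg: "nonneg_matrix W" and row_sum: "\<And>i. (\<Sum>j\<in>UNIV. W $ i $ j) = 1"
    and "is_eigenvalue W \<mu>"
  shows "cmod \<mu> \<le> 1"
proof -
  obtain v :: "complex^'n" where "v \<noteq> 0" and ev: "complex_matrix W *v v = \<mu> *s v"
    using assms(3) unfolding is_eigenvalue_def by blast
  define m where "m = Max (range (\<lambda>j. cmod (v $ j)))"
  have "m \<in> range (\<lambda>j. cmod (v $ j))"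
    unfolding m_def by (rule Max_in) auto
  then obtain i where m_eq: "m = cmod (v $ i)" by blast
  have m_ge: "cmod (v $ j) \<le> m" for j
    unfolding m_def by simp
  have "m > 0"
  proof (rule ccontr)
    assume "\<not> m > 0"
    then have "v $ j = 0" for j using m_ge[of j] by (smt (verit) norm_ge_zero norm_eq_zero)
    then show False using \<open>v \<noteq> 0\<close> by (simp add: vec_eq_iff)
  qed
  have "\<mu> * v $ i = (\<Sum>j\<in>UNIV. complex_of_real (W $ i $ j) * v $ j)"
    using arg_cong[OF ev, of "\<lambda>x. x $ i"]
    by (simp add: matrix_vector_mult_def complex_matrix_def)
  then have "cmod \<mu> * m = cmod (\<Sum>j\<in>UNIV. complex_of_real (W $ i $ j) * v $ j)"
    using m_eq by (metis norm_mult)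
  also have "\<dots> \<le> (\<Sum>j\<in>UNIV. cmod (complex_of_real (W $ i $ j) * v $ j))"
    by (rule norm_sum)
  also have "\<dots> \<le> (\<Sum>j\<in>UNIV. W $ i $ j * m)"
  proof (rule sum_mono)
    fix j
    have "W $ i $ j \<ge> 0" using nonneg unfolding nonneg_matrix_def by simp
    then show "cmod (complex_of_real (W $ i $ j) * v $ j) \<le> W $ i $ j * m"
      using m_ge[of j] by (simp add: norm_mult mult_left_mono)
  qed
  also have "\<dots> = m"
    using row_sum[of i] by (simp add: sum_distrib_right[symmetric])
  finally show ?thesis using \<open>m > 0\<close> by simp
qed

lemma adjacency_symmetric: "adjacency_matrix A \<Longrightarrow> A $ i $ j = A $ j $ i"
  unfolding adjacency_matrix_def by blast

lemma adjacency_diagonal_0: "adjacency_matrix A \<Longrightarrow> A $ i $ i = 0"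
  unfolding adjacency_matrix_def by blast

lemma adjacency_entry_cases: "adjacency_matrix A \<Longrightarrow> A $ i $ j = 0 \<or> A $ i $ j = 1"
  unfolding adjacency_matrix_def by blast

lemma adjacency_entry_nonneg: "adjacency_matrix A \<Longrightarrow> A $ i $ j \<ge> 0"
  using adjacency_entry_cases[of A i j] by auto

definition neighbor_weight :: "real^'n^'n \<Rightarrow> real^'n \<Rightarrow> 'n \<Rightarrow> real" where
  "neighbor_weight A w i = (\<Sum>j\<in>neighbors A i. w $ j)"

lemma neighbor_weight_eq_sum:
  assumes "adjacency_matrix A"
  shows "neighbor_weight A w i = (\<Sum>j\<in>UNIV. A $ i $ j * w $ j)"
proof -
  have "neighbor_weight A w i = (\<Sum>j\<in>UNIV. if A $ i $ j = 1 then w $ j else 0)"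
    unfolding neighbor_weight_def neighbors_def by (simp add: sum.If_cases)
  also have "\<dots> = (\<Sum>j\<in>UNIV. A $ i $ j * w $ j)"
    using adjacency_entry_cases[OF assms] by (intro sum.cong) auto
  finally show ?thesis .
qed

lemma neighbors_empty_if_degree_0:
  assumes "adjacency_matrix A" and "degree A i = 0"
  shows "neighbors A i = {}"
proof -
  have "\<forall>j. A $ i $ j = 0"
    using assms(2) sum_nonneg_eq_0_iff[of UNIV "\<lambda>j. A $ i $ j"] adjacency_entry_nonneg[OF assms(1)]
    unfolding degree_def by simp
  then show ?thesis unfolding neighbors_def by simp
qed

text \<open>No connectivity is needed here: at an isolated node the division by \<open>l\<^sub>i\<^sub>i = 0\<close>
  yields \<open>0\<close>, which is also the (empty) neighbor weight.\<close>

lemma What_entry: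
  assumes "adjacency_matrix A"
  shows "What \<epsilon> A w $ i $ j =
           (if i = j then 1 - \<epsilon> * neighbor_weight A w i else \<epsilon> * A $ i $ j * w $ j)"
proof (cases "i = j")
  case True
  have "neighbor_weight A w i / degree A i * degree A i = neighbor_weight A w i"
    using neighbors_empty_if_degree_0[OF assms, of i] by (auto simp: neighbor_weight_def)
  then show ?thesis
    using True adjacency_diagonal_0[OF assms, of i]
    unfolding What_def hadamard_def Tmat_def laplacian_def
    by (simp add: mat_def neighbor_weight_def)
qed (simp add: What_def hadamard_def Tmat_def laplacian_def mat_def)

lemma What_row_sum:
  assumes "adjacency_matrix A"
  shows "(\<Sum>j\<in>UNIV. What \<epsilon> A w $ i $ j) = 1"
proof -
  have "(\<Sum>j\<in>UNIV. What \<epsilon> A w $ i $ j)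
      = (\<Sum>j\<in>UNIV. (if i = j then 1 - \<epsilon> * neighbor_weight A w i else 0) + \<epsilon> * (A $ i $ j * w $ j))"
    using What_entry[OF assms] adjacency_diagonal_0[OF assms] by (intro sum.cong) auto
  also have "\<dots> = 1 - \<epsilon> * neighbor_weight A w i + \<epsilon> * neighbor_weight A w i"
    by (simp add: sum.distrib sum_distrib_left[symmetric] neighbor_weight_eq_sum[OF assms])
  finally show ?thesis by simp
qed

lemma What_right_eigenvector:
  assumes "adjacency_matrix A"
  shows "What \<epsilon> A w *v vec 1 = vec 1"
  using What_row_sum[OF assms] by (simp add: matrix_vector_mult_def vec_eq_iff)

lemma What_left_eigenvector:
  assumes "adjacency_matrix A"
  shows "w v* What \<epsilon> A w = w"
proof -
  have "(\<Sum>i\<in>UNIV. w $ i * What \<epsilon> A w $ i $ j) = w $ j" for j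
  proof -
    have "(\<Sum>i\<in>UNIV. w $ i * What \<epsilon> A w $ i $ j)
        = (\<Sum>i\<in>UNIV. (if i = j then w $ j * (1 - \<epsilon> * neighbor_weight A w j) else 0)
                      + \<epsilon> * w $ j * (A $ j $ i * w $ i))"
    proof (rule sum.cong)
      fix i
      show "w $ i * What \<epsilon> A w $ i $ j
          = (if i = j then w $ j * (1 - \<epsilon> * neighbor_weight A w j) else 0)
            + \<epsilon> * w $ j * (A $ j $ i * w $ i)"
        using adjacency_diagonal_0[OF assms, of j] adjacency_symmetric[OF assms, of i j]
        by (cases "i = j") (simp_all add: What_entry[OF assms] algebra_simps)
    qed simp
    also have "\<dots> = w $ j * (1 - \<epsilon> * neighbor_weight A w j) + \<epsilon> * w $ j * neighbor_weight A w j"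
      by (simp add: sum.distrib sum_distrib_left[symmetric] neighbor_weight_eq_sum[OF assms])
    finally show ?thesis by (simp add: algebra_simps)
  qed
  then show ?thesis by (simp add: vector_matrix_mult_def vec_eq_iff)
qed

lemma What_nonneg:
  assumes "adjacency_matrix A" and "\<And>i. w $ i \<ge> 0" and "\<epsilon> \<ge> 0"
    and "\<And>i. \<epsilon> * neighbor_weight A w i \<le> 1"
  shows "nonneg_matrix (What \<epsilon> A w)"
  unfolding nonneg_matrix_def What_entry[OF assms(1)]
  using assms adjacency_entry_nonneg[OF assms(1)] by simp

lemma What_diagonal_pos:
  "adjacency_matrix A \<Longrightarrow> \<epsilon> * neighbor_weight A w i < 1 \<Longrightarrow> What \<epsilon> A w $ i $ i > 0"
  by (simp add: What_entry)

lemma What_edge_pos: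
  assumes "adjacency_matrix A" and "w $ j > 0" and "\<epsilon> > 0" and "A $ i $ j = 1"
  shows "What \<epsilon> A w $ i $ j > 0"
  using assms What_entry[OF assms(1), of \<epsilon> w i j] adjacency_diagonal_0[OF assms(1), of i] by auto

lemma mult_less_1_if_less_inverse_Max:
  fixes f :: "'a::finite \<Rightarrow> real"
  assumes "0 < \<epsilon>" and "\<epsilon> < 1 / Max (range f)"
  shows "\<epsilon> * f i < 1"
proof -
  have "Max (range f) > 0"
  proof (rule ccontr)
    assume "\<not> Max (range f) > 0"
    then have "1 / Max (range f) \<le> 0"
      by (intro divide_nonneg_nonpos) (simp_all only: not_less zero_le_one)
    then show False using assms by linarith
  qed
  then have "\<epsilon> * Max (range f) < 1"
    using assms(2) by (simp add: field_simps)
  moreover have "\<epsilon> * f i \<le> \<epsilon> * Max (range f)"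
    using assms(1) by (simp add: mult_left_mono)
  ultimately show ?thesis by linarith
qed

theorem lemma3:
  fixes A :: "real^'n^'n" and w :: "real^'n" and \<epsilon> :: real
  assumes "CARD('n) \<ge> 2"
    and "adjacency_matrix A"
    and "connected_graph A"
    and "\<forall>i. w $ i > 0"
    and "0 < \<epsilon>"
    and "\<epsilon> < 1 / Max (range (\<lambda>i. \<Sum>j\<in>neighbors A i. w $ j))"
  shows "nonneg_matrix (What \<epsilon> A w) \<and>
         w v* What \<epsilon> A w = w \<and>
         What \<epsilon> A w *v vec 1 = vec 1 \<and>
         (\<forall>\<mu>. is_eigenvalue (What \<epsilon> A w) \<mu> \<longrightarrow> cmod \<mu> \<le> 1) \<and>
         primitive_matrix (What \<epsilon> A w)"
proof -
  let ?W = "What \<epsilon> A w"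
  have small: "\<epsilon> * neighbor_weight A w i < 1" for i
    using mult_less_1_if_less_inverse_Max[OF assms(5)] assms(6)
    unfolding neighbor_weight_def[abs_def] by blast
  have nonneg: "nonneg_matrix ?W"
    using What_nonneg[OF assms(2)] assms(4,5) small by (simp add: less_imp_le)
  have "primitive_matrix ?W"
  proof (rule primitive_matrix_if_connected[OF nonneg])
    show "What \<epsilon> A w $ i $ i > 0" for i
      using What_diagonal_pos[OF assms(2) small] .
    show "What \<epsilon> A w $ i $ j > 0" if "(i, j) \<in> {(k, l). A $ k $ l = 1}" for i j
      using What_edge_pos[OF assms(2)] assms(4,5) that by simp
    show "(i, j) \<in> {(k, l). A $ k $ l = 1}\<^sup>*" for i j
      using assms(3) unfolding connected_graph_def by blast
  qed
  moreover have "cmod \<mu> \<le> 1" if "is_eigenvalue ?W \<mu>" for \<mu>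
    using eigenvalue_norm_le_1_if_stochastic[OF nonneg What_row_sum[OF assms(2)] that] .
  ultimately show ?thesis
    using nonneg What_left_eigenvector[OF assms(2)] What_right_eigenvector[OF assms(2)] by blast
qed

end
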